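(* For any $m,n\in\mathbb N$, the set $$\Delta'_{mn}=\{(p,q)\in(0,1/16)^2:\ S_1^m(A_{pq})\cap S_2^n(A_{pq})\neq\varnothing\}$$ is a closed subset of $(0,1/16)^2$ of two-dimensional Lebesgue measure zero.
   Context: For $p,q\in(0,1/2)$ let $S_1(x)=px$, $S_2(x)=qx$, $S_3(x)=px+1-p$, $S_4(x)=qx+1-q$, let $K_{pq}$ be the attractor of $\{S_1,S_2,S_3,S_4\}$ (the unique nonempty compact $K\subset\mathbb R$ with $K=\bigcup_{i=1}^4S_i(K)$), and let $A_{pq}=S_3(K_{pq})\cup S_4(K_{pq})$. In the definition of $\Delta'_{mn}$ all maps and sets correspond to the parameters $(p,q)$. *)

theory Defs
  imports "HOL-Analysis.Analysis"
begin

definition S1 :: "real \<Rightarrow> real \<Rightarrow> real \<Rightarrow> real" where "S1 p q x = p * x"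
definition S2 :: "real \<Rightarrow> real \<Rightarrow> real \<Rightarrow> real" where "S2 p q x = q * x"
definition S3 :: "real \<Rightarrow> real \<Rightarrow> real \<Rightarrow> real" where "S3 p q x = p * x + 1 - p"
definition S4 :: "real \<Rightarrow> real \<Rightarrow> real \<Rightarrow> real" where "S4 p q x = q * x + 1 - q"

definition attractor :: "real \<Rightarrow> real \<Rightarrow> real set" where
  "attractor p q = (THE K. K \<noteq> {} \<and> compact K \<and>
      K = S1 p q ` K \<union> S2 p q ` K \<union> S3 p q ` K \<union> S4 p q ` K)"

definition A_set :: "real \<Rightarrow> real \<Rightarrow> real set" where
  "A_set p q = S3 p q ` attractor p q \<union> S4 p q ` attractor p q"

definition Delta' :: "nat \<Rightarrow> nat \<Rightarrow> (real \<times> real) set" where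
  "Delta' m n = {(p, q). p \<in> {0<..<1/16} \<and> q \<in> {0<..<1/16} \<and>
      ((S1 p q ^^ m) ` A_set p q) \<inter> ((S2 p q ^^ n) ` A_set p q) \<noteq> {}}"

end

theory Submission
  imports Defs
begin

text \<open>Points of \<open>A_set p q\<close> are approximated, up to \<open>max p q ^ k\<close>, by images of \<open>0\<close> under
  length-\<open>k\<close> compositions of the four maps, and these images depend Lipschitz-continuously on
  \<open>(p, q)\<close>. Hence \<open>A_set p q\<close> is upper semicontinuous in the parameters, which makes the
  solvability of \<open>p^m a = q^n b\<close> with \<open>a, b \<in> A_set p q\<close> a closed condition.

  For the measure, fix \<open>p\<close> and look at \<open>q \<le> \<rho> < 1/16\<close>. Approximating both points of a solution
  by words of length \<open>k\<close> sorts the parameters \<open>q\<close> into \<open>16^k\<close> classes. Within one class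
  \<open>q^n b\<close> grows with \<open>q\<close> (at rate about \<open>q^(n-1)\<close>) faster than \<open>p^m a\<close> and \<open>q^n b\<close> can be
  moved by the points (about \<open>q^n\<close> times their displacement), so a class has diameter at most
  \<open>\<rho>^k\<close>. Every vertical slice is thus covered by sets of total length \<open>2 (16 \<rho>)^k \<longrightarrow> 0\<close>,
  and Tonelli's theorem gives planar measure zero.\<close>

definition ifs_ratio :: "real \<Rightarrow> real \<Rightarrow> bool \<times> bool \<Rightarrow> real" where
  "ifs_ratio p q c = (if fst c then q else p)"

definition ifs_map :: "real \<Rightarrow> real \<Rightarrow> bool \<times> bool \<Rightarrow> real \<Rightarrow> real" where
  "ifs_map p q c x = ifs_ratio p q c * x + (if snd c then 1 - ifs_ratio p q c else 0)"

fun ifs_word :: "real \<Rightarrow> real \<Rightarrow> (bool \<times> bool) list \<Rightarrow> real \<Rightarrow> real" where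
  "ifs_word p q [] x = x"
| "ifs_word p q (c # w) x = ifs_map p q c (ifs_word p q w x)"

lemma S1_S2_S3_S4_eq_ifs_map:
  "S1 p q = ifs_map p q (False, False)" "S2 p q = ifs_map p q (True, False)"
  "S3 p q = ifs_map p q (False, True)" "S4 p q = ifs_map p q (True, True)"
  by (auto simp: fun_eq_iff S1_def S2_def S3_def S4_def ifs_map_def ifs_ratio_def)

lemma Un_images_S1_S2_S3_S4:
  "S1 p q ` K \<union> S2 p q ` K \<union> S3 p q ` K \<union> S4 p q ` K = (\<Union>c. ifs_map p q c ` K)"
proof -
  have UNIV_eq: "(UNIV :: (bool \<times> bool) set) = {(False, False), (True, False), (False, True), (True, True)}"
    by auto
  show ?thesis
    unfolding S1_S2_S3_S4_eq_ifs_map UNIV_eq by auto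
qed

lemma continuous_on_ifs_map: "continuous_on S (ifs_map p q c)"
  unfolding ifs_map_def by (intro continuous_intros)

lemma ifs_word_append: "ifs_word p q (u @ v) x = ifs_word p q u (ifs_word p q v x)"
  by (induction u) auto

lemma ifs_word_dist:
  assumes "0 \<le> p" "0 \<le> q"
  shows "\<bar>ifs_word p q w x - ifs_word p q w y\<bar> \<le> max p q ^ length w * \<bar>x - y\<bar>"
proof (induction w)
  case (Cons c w)
  have r: "0 \<le> ifs_ratio p q c" "ifs_ratio p q c \<le> max p q"
    using assms by (auto simp: ifs_ratio_def)
  have "\<bar>ifs_word p q (c # w) x - ifs_word p q (c # w) y\<bar>
      = ifs_ratio p q c * \<bar>ifs_word p q w x - ifs_word p q w y\<bar>"
    using r by (simp add: ifs_map_def abs_mult flip: right_diff_distrib)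
  also have "\<dots> \<le> max p q * (max p q ^ length w * \<bar>x - y\<bar>)"
    using r Cons by (intro mult_mono) auto
  finally show ?case by simp
qed simp

lemma ifs_map_unit_interval:
  assumes "0 \<le> p" "p \<le> 1" "0 \<le> q" "q \<le> 1" "x \<in> {0..1}"
  shows "ifs_map p q c x \<in> {0..1}"
proof -
  define r where "r = ifs_ratio p q c"
  have "0 \<le> r" "r \<le> 1" using assms by (auto simp: r_def ifs_ratio_def)
  moreover have "0 \<le> r * x" "r * x \<le> r"
    using \<open>0 \<le> r\<close> assms(5) by (auto simp: mult_left_le)
  ultimately show ?thesis by (auto simp: ifs_map_def r_def[symmetric])
qed

lemma ifs_word_unit_interval:
  assumes "0 \<le> p" "p \<le> 1" "0 \<le> q" "q \<le> 1" "x \<in> {0..1}"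
  shows "ifs_word p q w x \<in> {0..1}"
proof (induction w)
  case (Cons c w)
  then show ?case using ifs_map_unit_interval[OF assms(1-4)] by simp
qed (use assms in simp)

lemma ifs_map_param_dist:
  assumes "y \<in> {0..1}" "0 \<le> p'" "p' \<le> 1/2" "0 \<le> q'" "q' \<le> 1/2"
  shows "\<bar>ifs_map p q c y - ifs_map p' q' c y'\<bar> \<le> \<bar>p - p'\<bar> + \<bar>q - q'\<bar> + \<bar>y - y'\<bar> / 2"
proof -
  define r where "r = ifs_ratio p q c"
  define r' where "r' = ifs_ratio p' q' c"
  define t where "t = (if snd c then y - 1 else y)"
  have "\<bar>r - r'\<bar> \<le> \<bar>p - p'\<bar> + \<bar>q - q'\<bar>" "0 \<le> r'" "r' \<le> 1/2"
    using assms by (auto simp: r_def r'_def ifs_ratio_def)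
  moreover have "\<bar>t\<bar> \<le> 1" using assms(1) by (auto simp: t_def)
  ultimately have "\<bar>r - r'\<bar> * \<bar>t\<bar> \<le> \<bar>p - p'\<bar> + \<bar>q - q'\<bar>" "r' * \<bar>y - y'\<bar> \<le> \<bar>y - y'\<bar> / 2"
    using mult_mono[of "\<bar>r - r'\<bar>" "\<bar>p - p'\<bar> + \<bar>q - q'\<bar>" "\<bar>t\<bar>" 1]
      mult_right_mono[of r' "1/2" "\<bar>y - y'\<bar>"] by auto
  then have "\<bar>(r - r') * t\<bar> \<le> \<bar>p - p'\<bar> + \<bar>q - q'\<bar>" "\<bar>r' * (y - y')\<bar> \<le> \<bar>y - y'\<bar> / 2"
    using \<open>0 \<le> r'\<close> by (simp_all add: abs_mult)
  moreover have "ifs_map p q c y - ifs_map p' q' c y' = (r - r') * t + r' * (y - y')"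
    by (cases "snd c") (simp_all add: ifs_map_def r_def[symmetric] r'_def[symmetric] t_def algebra_simps)
  ultimately show ?thesis by linarith
qed

lemma ifs_word_param_dist:
  assumes "0 \<le> p" "p \<le> 1/2" "0 \<le> q" "q \<le> 1/2" "0 \<le> p'" "p' \<le> 1/2" "0 \<le> q'" "q' \<le> 1/2"
    and "x \<in> {0..1}"
  shows "\<bar>ifs_word p q w x - ifs_word p' q' w x\<bar> \<le> 2 * (\<bar>p - p'\<bar> + \<bar>q - q'\<bar>)"
proof (induction w)
  case (Cons c w)
  have "ifs_word p q w x \<in> {0..1}" using assms by (intro ifs_word_unit_interval) auto
  then show ?case
    using ifs_map_param_dist[of "ifs_word p q w x" p' q' p q c "ifs_word p' q' w x"] Cons assms(5-8)
    by auto
qed simp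

definition ifs_orbit_closure :: "real \<Rightarrow> real \<Rightarrow> real set" where
  "ifs_orbit_closure p q = closure (range (\<lambda>w. ifs_word p q w 0))"

lemma ifs_word_in_orbit_closure: "ifs_word p q w 0 \<in> ifs_orbit_closure p q"
  unfolding ifs_orbit_closure_def by (simp add: closure_subset[THEN subsetD])

lemma ifs_orbit_closure_subset:
  assumes "0 \<le> p" "p \<le> 1" "0 \<le> q" "q \<le> 1"
  shows "ifs_orbit_closure p q \<subseteq> {0..1}"
  unfolding ifs_orbit_closure_def
  using ifs_word_unit_interval[OF assms, of 0] by (intro closure_minimal) auto

lemma compact_ifs_orbit_closure:
  assumes "0 \<le> p" "p \<le> 1" "0 \<le> q" "q \<le> 1"
  shows "compact (ifs_orbit_closure p q)"
  using ifs_orbit_closure_subset[OF assms] bounded_subset[OF bounded_closed_interval]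
  unfolding compact_eq_bounded_closed ifs_orbit_closure_def by blast

lemma ifs_orbit_closure_invariant:
  assumes "0 \<le> p" "p \<le> 1" "0 \<le> q" "q \<le> 1"
  shows "(\<Union>c. ifs_map p q c ` ifs_orbit_closure p q) = ifs_orbit_closure p q"
proof
  show "(\<Union>c. ifs_map p q c ` ifs_orbit_closure p q) \<subseteq> ifs_orbit_closure p q"
  proof (intro UN_least)
    fix c
    have "ifs_map p q c ` range (\<lambda>w. ifs_word p q w 0) \<subseteq> ifs_orbit_closure p q"
      using ifs_word_in_orbit_closure[of p q "c # _"] by auto
    then show "ifs_map p q c ` ifs_orbit_closure p q \<subseteq> ifs_orbit_closure p q"
      unfolding ifs_orbit_closure_def
      by (intro image_closure_subset continuous_on_ifs_map) (auto simp: ifs_orbit_closure_def)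
  qed
next
  have "compact (ifs_map p q c ` ifs_orbit_closure p q)" for c
    by (intro compact_continuous_image continuous_on_ifs_map compact_ifs_orbit_closure assms)
  then have "closed (\<Union>c. ifs_map p q c ` ifs_orbit_closure p q)"
    by (intro closed_Union compact_imp_closed) auto
  moreover have "ifs_word p q w 0 \<in> (\<Union>c. ifs_map p q c ` ifs_orbit_closure p q)" for w
  proof (cases w)
    case Nil
    then have "ifs_word p q w 0 = ifs_map p q (False, False) (ifs_word p q [] 0)"
      by (simp add: ifs_map_def)
    then show ?thesis using ifs_word_in_orbit_closure by blast
  next
    case (Cons c u)
    then show ?thesis using ifs_word_in_orbit_closure[of p q u] by (intro UN_I[of c]) auto
  qed
  ultimately show "ifs_orbit_closure p q \<subseteq> (\<Union>c. ifs_map p q c ` ifs_orbit_closure p q)"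
    unfolding ifs_orbit_closure_def[of p q] by (intro closure_minimal) auto
qed

lemma invariant_ifs_word_closed:
  assumes "K = (\<Union>c. ifs_map p q c ` K)" "x \<in> K"
  shows "ifs_word p q w x \<in> K"
proof (induction w)
  case (Cons c w)
  then show ?case using assms(1) by auto
qed (use assms in simp)

lemma invariant_ifs_word_decomp:
  assumes "K = (\<Union>c. ifs_map p q c ` K)" "a \<in> K"
  shows "\<exists>w x. length w = k \<and> x \<in> K \<and> a = ifs_word p q w x"
proof (induction k)
  case 0
  then show ?case using assms(2) by (intro exI[of _ "[]"]) auto
next
  case (Suc k)
  then obtain w x where wx: "length w = k" "x \<in> K" "a = ifs_word p q w x" by auto
  then obtain c y where "y \<in> K" "x = ifs_map p q c y" using assms(1) by blast
  then show ?case using wx by (intro exI[of _ "w @ [c]"] exI[of _ y]) (auto simp: ifs_word_append)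
qed

text \<open>Every point of a compact invariant set is a limit of images of an arbitrary point of
  another invariant set under ever longer (hence ever more contracting) words.\<close>

lemma compact_invariant_subset:
  assumes pq: "0 < p" "p < 1" "0 < q" "q < 1"
    and K: "compact K" "K = (\<Union>c. ifs_map p q c ` K)"
    and K': "K' \<noteq> {}" "closed K'" "K' = (\<Union>c. ifs_map p q c ` K')"
  shows "K \<subseteq> K'"
proof
  fix a assume "a \<in> K"
  obtain y where y: "y \<in> K'" using K'(1) by auto
  obtain R where R: "0 < R" "\<And>x. x \<in> K \<Longrightarrow> \<bar>x\<bar> \<le> R"
    using compact_imp_bounded[OF K(1)] by (auto simp: bounded_pos)
  define B where "B = \<bar>y\<bar> + R"
  have B: "0 < B" "\<And>x. x \<in> K \<Longrightarrow> \<bar>y - x\<bar> \<le> B"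
    using R by (force simp: B_def)+
  have "\<exists>z\<in>K'. dist z a < \<epsilon>" if \<epsilon>: "0 < \<epsilon>" for \<epsilon>
  proof -
    have M: "0 < max p q" "max p q < 1" using pq by auto
    obtain k where k: "max p q ^ k < \<epsilon> / B"
      using real_arch_pow_inv[OF _ M(2), of "\<epsilon> / B"] \<epsilon> B(1) by auto
    obtain w x where wx: "length w = k" "x \<in> K" "a = ifs_word p q w x"
      using invariant_ifs_word_decomp[OF K(2) \<open>a \<in> K\<close>] by blast
    have "\<bar>ifs_word p q w y - a\<bar> \<le> max p q ^ k * \<bar>y - x\<bar>"
      using ifs_word_dist[of p q w y x] pq wx by simp
    also have "\<dots> \<le> max p q ^ k * B"
      using B(2)[OF wx(2)] M by (intro mult_left_mono) auto
    also have "\<dots> < \<epsilon>" using k B(1) by (simp add: pos_less_divide_eq)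
    finally show ?thesis
      using invariant_ifs_word_closed[OF K'(3) y] by (auto simp: dist_real_def)
  qed
  then show "a \<in> K'" using closed_approachable[OF K'(2)] by blast
qed

lemma attractor_eq_ifs_orbit_closure:
  assumes pq: "0 < p" "p < 1" "0 < q" "q < 1"
  shows "attractor p q = ifs_orbit_closure p q"
  unfolding attractor_def Un_images_S1_S2_S3_S4
proof (rule the_equality)
  have "0 \<le> p" "p \<le> 1" "0 \<le> q" "q \<le> 1" using pq by auto
  note orbit = compact_ifs_orbit_closure[OF this] ifs_orbit_closure_invariant[OF this, symmetric]
  moreover have "ifs_orbit_closure p q \<noteq> {}" using ifs_word_in_orbit_closure by blast
  ultimately show "ifs_orbit_closure p q \<noteq> {} \<and> compact (ifs_orbit_closure p q) \<and>
      ifs_orbit_closure p q = (\<Union>c. ifs_map p q c ` ifs_orbit_closure p q)"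
    by blast
  fix K assume "K \<noteq> {} \<and> compact K \<and> K = (\<Union>c. ifs_map p q c ` K)"
  then show "K = ifs_orbit_closure p q"
    using compact_invariant_subset[OF pq] orbit \<open>ifs_orbit_closure p q \<noteq> {}\<close>
    by (metis compact_imp_closed subset_antisym)
qed

lemma A_set_eq_ifs_orbit_closure:
  assumes "0 < p" "p < 1" "0 < q" "q < 1"
  shows "A_set p q = (\<Union>b. ifs_map p q (b, True) ` ifs_orbit_closure p q)"
proof -
  have UNIV_bool: "(UNIV :: bool set) = {False, True}" by auto
  show ?thesis
    unfolding A_set_def attractor_eq_ifs_orbit_closure[OF assms] S1_S2_S3_S4_eq_ifs_map UNIV_bool
    by auto
qed

lemma A_set_subset:
  assumes "0 < p" "p < 1" "0 < q" "q < 1"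
  shows "A_set p q \<subseteq> {1 - max p q..1}"
proof
  fix a assume "a \<in> A_set p q"
  then obtain b x where x: "x \<in> ifs_orbit_closure p q" and a: "a = ifs_map p q (b, True) x"
    unfolding A_set_eq_ifs_orbit_closure[OF assms] by blast
  define r where "r = ifs_ratio p q (b, True)"
  have "0 \<le> x" "x \<le> 1" using ifs_orbit_closure_subset[of p q] x assms by auto
  moreover have "0 \<le> r" "r \<le> max p q" using assms by (auto simp: r_def ifs_ratio_def)
  ultimately have "0 \<le> r * x" "r * x \<le> r" by (auto simp: mult_left_le)
  moreover have "a = r * x + 1 - r" by (simp add: a ifs_map_def r_def)
  ultimately show "a \<in> {1 - max p q..1}" using \<open>r \<le> max p q\<close> by auto
qed

lemma compact_A_set:
  assumes "0 < p" "p < 1" "0 < q" "q < 1"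
  shows "compact (A_set p q)"
proof -
  have "compact (ifs_map p q (b, True) ` ifs_orbit_closure p q)" for b
    using assms by (intro compact_continuous_image continuous_on_ifs_map compact_ifs_orbit_closure) auto
  then show ?thesis
    unfolding A_set_eq_ifs_orbit_closure[OF assms] by (intro compact_UN) auto
qed

lemma ifs_word_in_A_set:
  assumes "0 < p" "p < 1" "0 < q" "q < 1"
  shows "ifs_word p q ((b, True) # w) 0 \<in> A_set p q"
  unfolding A_set_eq_ifs_orbit_closure[OF assms]
  using ifs_word_in_orbit_closure[of p q w] by (intro UN_I[of b]) auto

lemma A_set_approx:
  assumes pq: "0 < p" "p < 1" "0 < q" "q < 1" and "a \<in> A_set p q"
  shows "\<exists>b w. length w = k \<and> \<bar>a - ifs_word p q ((b, True) # w) 0\<bar> \<le> max p q ^ Suc k"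
proof -
  have pq': "0 \<le> p" "p \<le> 1" "0 \<le> q" "q \<le> 1" using pq by auto
  obtain b x where x: "x \<in> ifs_orbit_closure p q" and a: "a = ifs_map p q (b, True) x"
    using \<open>a \<in> A_set p q\<close> unfolding A_set_eq_ifs_orbit_closure[OF pq] by blast
  obtain w y where w: "length w = k" and y: "y \<in> ifs_orbit_closure p q" and "x = ifs_word p q w y"
    using invariant_ifs_word_decomp[OF ifs_orbit_closure_invariant[OF pq', symmetric] x] by blast
  then have "a = ifs_word p q ((b, True) # w) y" by (simp add: a)
  moreover have "\<bar>y\<bar> \<le> 1" using ifs_orbit_closure_subset[OF pq'] y by auto
  ultimately have "\<bar>a - ifs_word p q ((b, True) # w) 0\<bar> \<le> max p q ^ Suc k * \<bar>y\<bar>"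
    using ifs_word_dist[of p q "(b, True) # w" y 0] pq w by simp
  also have "\<dots> \<le> max p q ^ Suc k" using \<open>\<bar>y\<bar> \<le> 1\<close> pq by (simp add: mult_left_le)
  finally show ?thesis using w by blast
qed

lemma A_set_param_dist:
  assumes pq: "0 < p" "p < 1/2" "0 < q" "q < 1/2" and pq': "0 < p'" "p' < 1/2" "0 < q'" "q' < 1/2"
    and "a' \<in> A_set p' q'"
  shows "\<exists>a\<in>A_set p q. \<bar>a - a'\<bar> \<le> 2 * (\<bar>p - p'\<bar> + \<bar>q - q'\<bar>)"
proof -
  have "closed (A_set p q)" "A_set p q \<noteq> {}"
    using compact_A_set[of p q] ifs_word_in_A_set[of p q False "[]"] pq
    by (auto intro: compact_imp_closed)
  then obtain a where a: "a \<in> A_set p q" and a_min: "\<And>x. x \<in> A_set p q \<Longrightarrow> dist a' a \<le> dist a' x"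
    using distance_attains_inf by blast
  have "\<bar>a - a'\<bar> \<le> 2 * (\<bar>p - p'\<bar> + \<bar>q - q'\<bar>) + \<epsilon>" if \<epsilon>: "0 < \<epsilon>" for \<epsilon>
  proof -
    obtain k where k: "(1/2 :: real) ^ k < \<epsilon>" using real_arch_pow_inv[OF \<epsilon>, of "1/2"] by auto
    obtain b w where w: "\<bar>a' - ifs_word p' q' ((b, True) # w) 0\<bar> \<le> max p' q' ^ Suc k"
      using A_set_approx[of p' q' a' k] pq' \<open>a' \<in> A_set p' q'\<close> by auto
    have "max p' q' ^ Suc k \<le> (1/2) ^ Suc k"
      using pq' by (intro power_mono) auto
    also have "\<dots> \<le> (1/2) ^ k" by simp
    finally have "max p' q' ^ Suc k \<le> (1/2) ^ k" .
    moreover have "\<bar>ifs_word p q ((b, True) # w) 0 - ifs_word p' q' ((b, True) # w) 0\<bar>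
        \<le> 2 * (\<bar>p - p'\<bar> + \<bar>q - q'\<bar>)"
      using pq pq' by (intro ifs_word_param_dist) auto
    moreover have "dist a' a \<le> dist a' (ifs_word p q ((b, True) # w) 0)"
      using pq by (intro a_min ifs_word_in_A_set) auto
    ultimately show ?thesis using w k unfolding dist_real_def by argo
  qed
  then show ?thesis using a field_le_epsilon by blast
qed

lemma funpow_S1_apply: "(S1 p q ^^ m) x = p ^ m * x"
  by (induction m) (auto simp: S1_def)

lemma funpow_S2_apply: "(S2 p q ^^ n) x = q ^ n * x"
  by (induction n) (auto simp: S2_def)

lemma mem_Delta'_iff:
  "(p, q) \<in> Delta' m n \<longleftrightarrow> p \<in> {0<..<1/16} \<and> q \<in> {0<..<1/16} \<and>
     (\<exists>a\<in>A_set p q. \<exists>b\<in>A_set p q. p ^ m * a = q ^ n * b)"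
  unfolding Delta'_def funpow_S1_apply[abs_def] funpow_S2_apply[abs_def] by blast

lemma abs_mult_diff_le:
  fixes x x' y y' :: real
  assumes "\<bar>y\<bar> \<le> 1" "\<bar>x'\<bar> \<le> 1"
  shows "\<bar>x * y - x' * y'\<bar> \<le> \<bar>x - x'\<bar> + \<bar>y - y'\<bar>"
proof -
  have "\<bar>(x - x') * y\<bar> \<le> \<bar>x - x'\<bar>" "\<bar>x' * (y - y')\<bar> \<le> \<bar>y - y'\<bar>"
    using assms by (simp_all add: abs_mult mult_left_le mult_left_le_one_le)
  moreover have "x * y - x' * y' = (x - x') * y + x' * (y - y')" by (simp add: algebra_simps)
  ultimately show ?thesis by linarith
qed

lemma Delta'_near_solution:
  assumes pq: "0 < p" "p < 1/2" "0 < q" "q < 1/2" and "(p', q') \<in> Delta' m n"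
  shows "\<exists>a\<in>A_set p q. \<exists>b\<in>A_set p q.
           \<bar>p ^ m * a - q ^ n * b\<bar> \<le> (real m + real n + 4) * (\<bar>p - p'\<bar> + \<bar>q - q'\<bar>)"
proof -
  define \<delta> where "\<delta> = \<bar>p - p'\<bar> + \<bar>q - q'\<bar>"
  obtain a' b' where a'b': "a' \<in> A_set p' q'" "b' \<in> A_set p' q'" "p' ^ m * a' = q' ^ n * b'"
    and pq': "0 < p'" "p' < 1/16" "0 < q'" "q' < 1/16"
    using \<open>(p', q') \<in> Delta' m n\<close> unfolding mem_Delta'_iff by auto
  obtain a b where a: "a \<in> A_set p q" "\<bar>a - a'\<bar> \<le> 2 * \<delta>" and b: "b \<in> A_set p q" "\<bar>b - b'\<bar> \<le> 2 * \<delta>"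
  proof -
    have pq'': "0 < p'" "p' < 1/2" "0 < q'" "q' < 1/2" using pq' by auto
    show thesis
      using that A_set_param_dist[OF pq pq'' a'b'(1)] A_set_param_dist[OF pq pq'' a'b'(2)]
      unfolding \<delta>_def by blast
  qed
  have "a \<in> {1 - max p q..1}" "b \<in> {1 - max p q..1}"
    using subsetD[OF A_set_subset] pq a(1) b(1) by auto
  then have "\<bar>a\<bar> \<le> 1" "\<bar>b\<bar> \<le> 1" "\<bar>p'\<bar> \<le> 1" "\<bar>q'\<bar> \<le> 1" "\<bar>p\<bar> \<le> 1" "\<bar>q\<bar> \<le> 1"
    using pq pq' by auto
  have "\<bar>p ^ m - p' ^ m\<bar> \<le> m * \<bar>p - p'\<bar>" "\<bar>q ^ n - q' ^ n\<bar> \<le> n * \<bar>q - q'\<bar>"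
    using norm_power_diff[of p p' m] norm_power_diff[of q q' n] \<open>\<bar>p\<bar> \<le> 1\<close> \<open>\<bar>p'\<bar> \<le> 1\<close>
      \<open>\<bar>q\<bar> \<le> 1\<close> \<open>\<bar>q'\<bar> \<le> 1\<close> by simp_all
  moreover have "\<bar>p' ^ m\<bar> \<le> 1" "\<bar>q' ^ n\<bar> \<le> 1"
    using \<open>\<bar>p'\<bar> \<le> 1\<close> \<open>\<bar>q'\<bar> \<le> 1\<close> by (simp_all add: power_abs power_le_one)
  ultimately have "\<bar>p ^ m * a - p' ^ m * a'\<bar> \<le> m * \<bar>p - p'\<bar> + 2 * \<delta>"
    "\<bar>q ^ n * b - q' ^ n * b'\<bar> \<le> n * \<bar>q - q'\<bar> + 2 * \<delta>"
    using abs_mult_diff_le[OF \<open>\<bar>a\<bar> \<le> 1\<close>, of "p' ^ m" "p ^ m" a']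
      abs_mult_diff_le[OF \<open>\<bar>b\<bar> \<le> 1\<close>, of "q' ^ n" "q ^ n" b'] a(2) b(2)
    by (simp_all add: abs_minus_commute)
  moreover have "m * \<bar>p - p'\<bar> \<le> m * \<delta>" "n * \<bar>q - q'\<bar> \<le> n * \<delta>"
    unfolding \<delta>_def by (simp_all add: mult_left_mono)
  moreover have "\<bar>p ^ m * a - q ^ n * b\<bar> \<le> \<bar>p ^ m * a - p' ^ m * a'\<bar> + \<bar>q ^ n * b - q' ^ n * b'\<bar>"
    using abs_triangle_ineq4[of "p ^ m * a - p' ^ m * a'" "q ^ n * b - q' ^ n * b'"] a'b'(3) by simp
  ultimately have "\<bar>p ^ m * a - q ^ n * b\<bar> \<le> m * \<delta> + n * \<delta> + 4 * \<delta>"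
    by linarith
  then have "\<bar>p ^ m * a - q ^ n * b\<bar> \<le> (real m + real n + 4) * \<delta>"
    by (simp add: distrib_right)
  then show ?thesis using a(1) b(1) unfolding \<delta>_def by blast
qed

lemma closedin_Delta': "closedin (top_of_set ({0<..<1/16} \<times> {0<..<1/16})) (Delta' m n)"
  unfolding closedin_limpt
proof (intro conjI allI impI)
  show "Delta' m n \<subseteq> {0<..<1/16} \<times> {0<..<1/16}" by (auto simp: Delta'_def)
  fix x assume "x islimpt Delta' m n \<and> x \<in> {0<..<1/16} \<times> {0<..<1/16}"
  then obtain p q where x: "x = (p, q)" and limpt: "(p, q) islimpt Delta' m n"
    and pq: "p \<in> {0<..<1/16}" "q \<in> {0<..<1/16}"
    by (cases x) auto
  define f where "f = (\<lambda>z :: real \<times> real. \<bar>p ^ m * fst z - q ^ n * snd z\<bar>)"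
  have "compact (A_set p q \<times> A_set p q)" using pq by (intro compact_Times compact_A_set) auto
  moreover have "continuous_on (A_set p q \<times> A_set p q) f" unfolding f_def by (intro continuous_intros)
  ultimately have closed: "closed (f ` (A_set p q \<times> A_set p q))"
    by (intro compact_imp_closed compact_continuous_image)
  have "0 \<in> closure (f ` (A_set p q \<times> A_set p q))"
    unfolding closure_approachable
  proof (intro allI impI)
    fix \<epsilon> :: real assume "0 < \<epsilon>"
    define C where "C = real m + real n + 4"
    have "0 < C" by (simp add: C_def)
    obtain p' q' where pq'_in: "(p', q') \<in> Delta' m n" and pq'_near: "dist (p', q') (p, q) < \<epsilon> / (2 * C)"
  proof -
      have "0 < \<epsilon> / (2 * C)" using \<open>0 < \<epsilon>\<close> \<open>0 < C\<close> by simp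
      then obtain x' where "x' \<in> Delta' m n" "dist x' (p, q) < \<epsilon> / (2 * C)"
        using limpt unfolding islimpt_approachable by blast
      then show thesis using that by (cases x') auto
    qed
    have "\<bar>p - p'\<bar> + \<bar>q - q'\<bar> \<le> 2 * dist (p', q') (p, q)"
      using dist_fst_le[of "(p', q')" "(p, q)"] dist_snd_le[of "(p', q')" "(p, q)"]
      by (simp add: dist_real_def abs_minus_commute)
    also have "\<dots> < \<epsilon> / C" using pq'_near \<open>0 < C\<close> by (simp add: field_simps)
    finally have "C * (\<bar>p - p'\<bar> + \<bar>q - q'\<bar>) < \<epsilon>" using \<open>0 < C\<close> by (simp add: field_simps)
    moreover obtain a b where "a \<in> A_set p q" "b \<in> A_set p q"
      "\<bar>p ^ m * a - q ^ n * b\<bar> \<le> C * (\<bar>p - p'\<bar> + \<bar>q - q'\<bar>)"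
      using Delta'_near_solution[OF _ _ _ _ pq'_in, of p q] pq unfolding C_def by auto
    ultimately show "\<exists>y\<in>f ` (A_set p q \<times> A_set p q). dist y 0 < \<epsilon>"
      by (intro bexI[of _ "f (a, b)"] imageI) (auto simp: f_def)
  qed
  then obtain a b where "a \<in> A_set p q" "b \<in> A_set p q" "f (a, b) = 0"
    using closed by (auto simp: closure_closed)
  then show "x \<in> Delta' m n" using pq by (auto simp: x f_def mem_Delta'_iff)
qed

lemma power_Suc_diff_ge:
  fixes x y :: real
  assumes "0 \<le> x" "x \<le> y"
  shows "x ^ n * (y - x) \<le> y ^ Suc n - x ^ Suc n"
proof -
  have "y * x ^ n \<le> y * y ^ n" using assms by (intro mult_left_mono power_mono) auto
  then show ?thesis by (simp add: algebra_simps)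
qed

text \<open>With \<open>d = q2 - q1\<close> and \<open>Y = q1^(n-1)\<close>: \<open>(15/16) Y d \<le> (q2^n - q1^n) b2 =
  P (a2 - a1) + q1^n (b1 - b2)\<close>, and both \<open>P\<close> and \<open>q1^n\<close> are at most \<open>Y/15\<close>.\<close>

lemma solution_param_gap:
  fixes P q1 q2 a1 a2 b1 b2 e :: real
  assumes "n \<ge> 1" "0 < q1" "q1 \<le> q2" "q2 \<le> 1/16" "0 \<le> P" "0 \<le> e"
    and "a1 \<in> {15/16..1}" "a2 \<in> {15/16..1}" "b1 \<in> {15/16..1}" "b2 \<in> {15/16..1}"
    and eq1: "P * a1 = q1 ^ n * b1" and eq2: "P * a2 = q2 ^ n * b2"
    and "\<bar>a1 - a2\<bar> \<le> 2 * (e + (q2 - q1))" "\<bar>b1 - b2\<bar> \<le> 2 * (e + (q2 - q1))"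
  shows "q2 - q1 \<le> e"
proof -
  obtain k where n: "n = Suc k" using \<open>n \<ge> 1\<close> by (cases n) auto
  define d where "d = q2 - q1"
  define Y where "Y = q1 ^ k"
  have "0 < Y" "0 \<le> d" using assms by (auto simp: Y_def d_def)
  have X1: "q1 ^ n \<le> Y / 16" "0 \<le> q1 ^ n"
    using assms \<open>0 < Y\<close> mult_right_mono[of q1 "1/16" Y] by (auto simp: n Y_def)
  have "P * (15/16) \<le> P * a1" using assms by (intro mult_left_mono) auto
  moreover have "q1 ^ n * b1 \<le> q1 ^ n" using assms X1(2) by (intro mult_left_le) auto
  ultimately have P: "P \<le> Y / 15" using eq1 X1(1) by linarith
  have "Y * d \<le> q2 ^ n - q1 ^ n"
    using power_Suc_diff_ge[of q1 q2 k] assms by (simp add: n Y_def d_def)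
  then have "(15/16) * (Y * d) \<le> (q2 ^ n - q1 ^ n) * b2"
    using assms \<open>0 < Y\<close> \<open>0 \<le> d\<close> by (subst mult.commute) (intro mult_mono, auto)
  also have "\<dots> = P * (a2 - a1) + q1 ^ n * (b1 - b2)"
    using eq1 eq2 by (simp add: algebra_simps)
  also have "\<dots> \<le> (Y / 15) * (2 * (e + d)) + (Y / 16) * (2 * (e + d))"
  proof (rule add_mono)
    have "P * (a2 - a1) \<le> P * (2 * (e + d))"
      using assms by (intro mult_left_mono) (auto simp: d_def abs_le_iff)
    also have "\<dots> \<le> (Y / 15) * (2 * (e + d))" using P assms \<open>0 \<le> d\<close> by (intro mult_right_mono) auto
    finally show "P * (a2 - a1) \<le> (Y / 15) * (2 * (e + d))" .
    have "q1 ^ n * (b1 - b2) \<le> q1 ^ n * (2 * (e + d))"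
      using assms X1(2) by (intro mult_left_mono) (auto simp: d_def abs_le_iff)
    also have "\<dots> \<le> (Y / 16) * (2 * (e + d))" using X1(1) assms \<open>0 \<le> d\<close> by (intro mult_right_mono) auto
    finally show "q1 ^ n * (b1 - b2) \<le> (Y / 16) * (2 * (e + d))" .
  qed
  also have "\<dots> = (31/120) * (Y * d) + (31/120) * (Y * e)" by (simp add: algebra_simps)
  finally have "(15/16) * (Y * d) \<le> (31/120) * (Y * d) + (31/120) * (Y * e)" .
  moreover have "0 \<le> Y * e" using \<open>0 < Y\<close> \<open>0 \<le> e\<close> by simp
  ultimately have "Y * d \<le> Y * e" by linarith
  then show ?thesis using \<open>0 < Y\<close> by (simp add: d_def)
qed

definition solution_cell ::
    "nat \<Rightarrow> nat \<Rightarrow> real \<Rightarrow> real \<Rightarrow> (bool \<times> bool) list \<Rightarrow> (bool \<times> bool) list \<Rightarrow> real set" where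
  "solution_cell m n p e u v = {q \<in> {0<..1/16}. \<exists>a\<in>A_set p q. \<exists>b\<in>A_set p q. p ^ m * a = q ^ n * b
      \<and> \<bar>a - ifs_word p q u 0\<bar> \<le> e \<and> \<bar>b - ifs_word p q v 0\<bar> \<le> e}"

lemma solution_cell_diam:
  assumes "n \<ge> 1" "0 < p" "p \<le> 1/16" "0 \<le> e"
    and "q1 \<in> solution_cell m n p e u v" "q2 \<in> solution_cell m n p e u v"
  shows "\<bar>q1 - q2\<bar> \<le> e"
proof -
  have gap: "q' - q \<le> e"
    if q: "q \<in> solution_cell m n p e u v" and q': "q' \<in> solution_cell m n p e u v" and "q \<le> q'"
    for q q'
  proof -
    obtain a b where q_pos: "0 < q" "q \<le> 1/16" and ab: "a \<in> A_set p q" "b \<in> A_set p q"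
      "p ^ m * a = q ^ n * b" "\<bar>a - ifs_word p q u 0\<bar> \<le> e" "\<bar>b - ifs_word p q v 0\<bar> \<le> e"
      using q unfolding solution_cell_def by auto
    obtain a' b' where q'_pos: "0 < q'" "q' \<le> 1/16" and ab': "a' \<in> A_set p q'" "b' \<in> A_set p q'"
      "p ^ m * a' = q' ^ n * b'" "\<bar>a' - ifs_word p q' u 0\<bar> \<le> e" "\<bar>b' - ifs_word p q' v 0\<bar> \<le> e"
      using q' unfolding solution_cell_def by auto
    have A_range: "A_set p r \<subseteq> {15/16..1}" if "0 < r" "r \<le> 1/16" for r
      by (rule order_trans[OF A_set_subset]) (use assms that in auto)
    have word_close: "\<bar>ifs_word p q w 0 - ifs_word p q' w 0\<bar> \<le> 2 * (q' - q)" for w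
      using ifs_word_param_dist[of p q p q' 0 w] assms q_pos q'_pos \<open>q \<le> q'\<close> by simp
    have "\<bar>a - a'\<bar> \<le> 2 * (e + (q' - q))"
      using word_close[of u] ab(4) ab'(4) by argo
    moreover have "\<bar>b - b'\<bar> \<le> 2 * (e + (q' - q))"
      using word_close[of v] ab(5) ab'(5) by argo
    moreover have "a \<in> {15/16..1}" "b \<in> {15/16..1}" "a' \<in> {15/16..1}" "b' \<in> {15/16..1}"
      using A_range[OF q_pos] A_range[OF q'_pos] ab(1,2) ab'(1,2) by blast+
    moreover have "0 \<le> p ^ m" using assms(2) by simp
    ultimately show ?thesis
      using solution_param_gap[OF assms(1) q_pos(1) \<open>q \<le> q'\<close> q'_pos(2) _ assms(4) _ _ _ _ ab(3) ab'(3)]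
      by blast
  qed
  show ?thesis
  proof (cases "q1 \<le> q2")
    case True
    then show ?thesis using gap[OF assms(5,6)] by simp
  next
    case False
    then show ?thesis using gap[OF assms(6,5)] by simp
  qed
qed

lemma emeasure_cover_by_small_sets:
  fixes C :: "'i \<Rightarrow> real set"
  assumes "finite I" "0 \<le> e" and diam: "\<And>i x y. i \<in> I \<Longrightarrow> x \<in> C i \<Longrightarrow> y \<in> C i \<Longrightarrow> \<bar>x - y\<bar> \<le> e"
  shows "\<exists>F\<in>sets lborel. (\<Union>i\<in>I. C i) \<subseteq> F \<and> emeasure lborel F \<le> of_nat (card I) * ennreal (2 * e)"
proof -
  define B where "B i = (if C i = {} then {} else {(SOME x. x \<in> C i) - e..(SOME x. x \<in> C i) + e})" for i
  have "C i \<subseteq> B i" if "i \<in> I" for i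
  proof
    fix y assume "y \<in> C i"
    define c where "c = (SOME x. x \<in> C i)"
    have "c \<in> C i" unfolding c_def using \<open>y \<in> C i\<close> by (rule someI)
    then have "\<bar>y - c\<bar> \<le> e" using diam[OF that \<open>y \<in> C i\<close>] by blast
    then show "y \<in> B i" using \<open>y \<in> C i\<close> by (auto simp: B_def c_def[symmetric] abs_le_iff)
  qed
  moreover have "emeasure lborel (\<Union>i\<in>I. B i) \<le> (\<Sum>i\<in>I. emeasure lborel (B i))"
    using \<open>finite I\<close> by (intro emeasure_subadditive_finite) (auto simp: B_def)
  moreover have "emeasure lborel (B i) \<le> ennreal (2 * e)" for i
    using \<open>0 \<le> e\<close> by (auto simp: B_def)
  then have "(\<Sum>i\<in>I. emeasure lborel (B i)) \<le> of_nat (card I) * ennreal (2 * e)"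
    using sum_mono[of I "\<lambda>i. emeasure lborel (B i)" "\<lambda>_. ennreal (2 * e)"] by simp
  moreover have "(\<Union>i\<in>I. B i) \<in> sets lborel"
    using \<open>finite I\<close> by (intro sets.finite_UN) (auto simp: B_def)
  ultimately show ?thesis by (intro bexI[of _ "\<Union>i\<in>I. B i"]) (auto dest: order_trans)
qed

lemma null_sets_if_small_covers:
  assumes "T \<in> sets M" "\<And>\<epsilon>. 0 < \<epsilon> \<Longrightarrow> \<exists>F\<in>sets M. T \<subseteq> F \<and> emeasure M F \<le> ennreal \<epsilon>"
  shows "T \<in> null_sets M"
proof -
  have "emeasure M T \<le> 0 + ennreal \<epsilon>" if "0 < \<epsilon>" for \<epsilon>
    using assms(2)[OF that] by (auto intro: emeasure_mono order_trans)
  then have "emeasure M T = 0" by (metis ennreal_le_epsilon le_zero_eq)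
  then show ?thesis using assms(1) by auto
qed

lemma sets_Delta': "Delta' m n \<in> sets (lborel \<Otimes>\<^sub>M (lborel :: real measure))"
proof -
  obtain U where "closed U" "Delta' m n = ({0<..<1/16} \<times> {0<..<1/16}) \<inter> U"
    using closedin_Delta'[of m n] by (auto simp: closedin_closed)
  moreover have "open ({0<..<1/16} \<times> {0<..<1/16} :: (real \<times> real) set)"
    by (intro open_Times open_greaterThanLessThan)
  ultimately have "Delta' m n \<in> sets (borel :: (real \<times> real) measure)" by auto
  then show ?thesis unfolding lborel_prod by simp
qed

lemma card_words_length: "card {w :: (bool \<times> bool) list. length w = k} = 4 ^ k"
  using card_lists_length_eq[of "UNIV :: (bool \<times> bool) set" k] by simp

lemma Delta'_slice_cover:
  assumes "n \<ge> 1" "0 < p" "p \<le> \<rho>" "\<rho> < 1/16"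
  shows "\<exists>F\<in>sets lborel. {q. (p, q) \<in> Delta' m n \<and> q \<le> \<rho>} \<subseteq> F
           \<and> emeasure lborel F \<le> ennreal (2 * (16 * \<rho>) ^ Suc k)"
proof -
  define e where "e = \<rho> ^ Suc k"
  define W where "W = {w :: (bool \<times> bool) list. length w = Suc k}"
  have "finite W" unfolding W_def using finite_lists_length_eq[of "UNIV :: (bool \<times> bool) set"] by simp
  have "0 \<le> e" using assms by (simp add: e_def)
  have cover: "{q. (p, q) \<in> Delta' m n \<and> q \<le> \<rho>} \<subseteq> (\<Union>(u, v)\<in>W \<times> W. solution_cell m n p e u v)"
  proof
    fix q assume "q \<in> {q. (p, q) \<in> Delta' m n \<and> q \<le> \<rho>}"
    then obtain a b where q: "0 < q" "q < 1/16" "q \<le> \<rho>" and ab: "a \<in> A_set p q" "b \<in> A_set p q"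
      "p ^ m * a = q ^ n * b"
      unfolding mem_Delta'_iff by auto
    have "max p q ^ Suc k \<le> e" unfolding e_def using assms q by (intro power_mono) auto
    moreover have "\<exists>u\<in>W. \<bar>x - ifs_word p q u 0\<bar> \<le> max p q ^ Suc k" if x: "x \<in> A_set p q" for x
    proof -
      obtain c w where "length w = k" "\<bar>x - ifs_word p q ((c, True) # w) 0\<bar> \<le> max p q ^ Suc k"
        using A_set_approx[OF _ _ _ _ x, of k] assms q by auto
      then show ?thesis by (intro bexI[of _ "(c, True) # w"]) (auto simp: W_def)
    qed
    then obtain u v where "u \<in> W" "\<bar>a - ifs_word p q u 0\<bar> \<le> max p q ^ Suc k"
      and "v \<in> W" "\<bar>b - ifs_word p q v 0\<bar> \<le> max p q ^ Suc k"
      using ab(1,2) by blast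
    ultimately have "q \<in> solution_cell m n p e u v"
      using q ab unfolding solution_cell_def by (intro CollectI conjI bexI[of _ a] bexI[of _ b]) auto
    then show "q \<in> (\<Union>(u, v)\<in>W \<times> W. solution_cell m n p e u v)" using \<open>u \<in> W\<close> \<open>v \<in> W\<close> by auto
  qed
  obtain F where F: "F \<in> sets lborel" "(\<Union>(u, v)\<in>W \<times> W. solution_cell m n p e u v) \<subseteq> F"
    "emeasure lborel F \<le> of_nat (card (W \<times> W)) * ennreal (2 * e)"
    using emeasure_cover_by_small_sets[of "W \<times> W" e "\<lambda>(u, v). solution_cell m n p e u v"]
      solution_cell_diam[of n p e] \<open>finite W\<close> \<open>0 \<le> e\<close> assms by fastforce
  have "card (W \<times> W) = 16 ^ Suc k"
    using card_words_length[of "Suc k"] by (simp add: W_def card_cartesian_product flip: power_mult_distrib)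
  moreover have "of_nat (16 ^ Suc k) * ennreal (2 * e) = ennreal (2 * (16 * \<rho>) ^ Suc k)"
    using \<open>0 \<le> e\<close> by (simp add: ennreal_of_nat_eq_real_of_nat e_def power_mult_distrib mult_ac
        flip: ennreal_mult)
  ultimately show ?thesis using F cover by (intro bexI[of _ F]) auto
qed

lemma Delta'_slice_below_null:
  assumes "n \<ge> 1" "0 < p" "p \<le> \<rho>" "\<rho> < 1/16"
  shows "{q. (p, q) \<in> Delta' m n \<and> q \<le> \<rho>} \<in> null_sets lborel"
proof (rule null_sets_if_small_covers)
  have "{q. (p, q) \<in> Delta' m n \<and> q \<le> \<rho>} = Pair p -` Delta' m n \<inter> {..\<rho>}" by auto
  then show "{q. (p, q) \<in> Delta' m n \<and> q \<le> \<rho>} \<in> sets lborel"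
    using sets_Pair1[OF sets_Delta'] by simp
  fix \<epsilon> :: real assume "0 < \<epsilon>"
  have "0 < 16 * \<rho>" "16 * \<rho> < 1" using assms by auto
  then obtain k where k: "(16 * \<rho>) ^ k < \<epsilon> / 2"
    using real_arch_pow_inv[of "\<epsilon> / 2" "16 * \<rho>"] \<open>0 < \<epsilon>\<close> by auto
  have "(16 * \<rho>) ^ Suc k \<le> (16 * \<rho>) ^ k"
    using \<open>0 < 16 * \<rho>\<close> \<open>16 * \<rho> < 1\<close> by (simp add: mult_left_le_one_le)
  then have "ennreal (2 * (16 * \<rho>) ^ Suc k) \<le> ennreal \<epsilon>" using k by (intro ennreal_leI) linarith
  then show "\<exists>F\<in>sets lborel. {q. (p, q) \<in> Delta' m n \<and> q \<le> \<rho>} \<subseteq> F \<and> emeasure lborel F \<le> ennreal \<epsilon>"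
    using Delta'_slice_cover[OF assms, of m k] by (auto dest: order_trans)
qed

lemma Delta'_slice_null:
  assumes "n \<ge> 1"
  shows "Pair p -` Delta' m n \<in> null_sets lborel"
proof (cases "0 < p \<and> p < 1/16")
  case False
  then have "Pair p -` Delta' m n = {}" by (auto simp: mem_Delta'_iff)
  then show ?thesis by simp
next
  case True
  define \<rho> where "\<rho> j = 1/16 - (1/16 - p) / (real j + 2)" for j :: nat
  have \<rho>: "p \<le> \<rho> j" "\<rho> j < 1/16" for j
  proof -
    have "(1/16 - p) / (real j + 2) \<le> (1/16 - p) / 1"
      using True by (intro divide_left_mono) auto
    moreover have "0 < (1/16 - p) / (real j + 2)" using True by simp
    ultimately show "p \<le> \<rho> j" "\<rho> j < 1/16" by (auto simp: \<rho>_def)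
  qed
  have "Pair p -` Delta' m n \<subseteq> (\<Union>j. {q. (p, q) \<in> Delta' m n \<and> q \<le> \<rho> j})"
  proof
    fix q assume q: "q \<in> Pair p -` Delta' m n"
    then have "0 < 1/16 - q" by (auto simp: mem_Delta'_iff)
    then obtain j :: nat where "1/16 - p < real j * (1/16 - q)"
      using reals_Archimedean3 by blast
    then have "1/16 - p \<le> (1/16 - q) * (real j + 2)"
      using \<open>0 < 1/16 - q\<close> by (simp add: algebra_simps)
    then have "(1/16 - p) / (real j + 2) \<le> 1/16 - q"
      by (simp add: pos_divide_le_eq)
    then have "q \<le> \<rho> j" by (simp add: \<rho>_def)
    then show "q \<in> (\<Union>j. {q. (p, q) \<in> Delta' m n \<and> q \<le> \<rho> j})" using q by blast
  qed
  moreover have "(\<Union>j. {q. (p, q) \<in> Delta' m n \<and> q \<le> \<rho> j}) \<in> null_sets lborel"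
    using Delta'_slice_below_null[OF assms] True \<rho> by (intro null_sets_UN) auto
  ultimately show ?thesis
    using sets_Pair1[OF sets_Delta'] null_sets_subset by (metis sets_lborel)
qed

lemma Delta'_null:
  assumes "n \<ge> 1"
  shows "Delta' m n \<in> null_sets (lborel \<Otimes>\<^sub>M (lborel :: real measure))"
proof -
  have "emeasure (lborel \<Otimes>\<^sub>M lborel) (Delta' m n) = (\<integral>\<^sup>+p. emeasure lborel (Pair p -` Delta' m n) \<partial>lborel)"
    using lborel.emeasure_pair_measure_alt[OF sets_Delta'] .
  also have "\<dots> = 0" by (simp add: null_setsD1[OF Delta'_slice_null[OF assms]])
  finally show ?thesis using sets_Delta' by auto
qed

theorem corollary18:
  fixes m n :: nat
  assumes "m \<ge> 1" and "n \<ge> 1"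
  shows "closedin (top_of_set ({0<..<1/16} \<times> {0<..<1/16})) (Delta' m n)
         \<and> Delta' m n \<in> null_sets (lebesgue :: (real \<times> real) measure)"
  using closedin_Delta' null_sets_completionI[OF Delta'_null[OF assms(2)]]
  unfolding lborel_prod by blast

end
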